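(* Let $\theta:H\to H$ be an endomorphism and $E$ an $n$-ary Endo-primary hyperideal of $H$ associated with $\theta$. Then $rad(E)$ is an $n$-ary Endo-prime hyperideal associated with $\theta$.
   Context: Throughout, $(H,h,k)$ is a commutative Krasner $(m,n)$-hyperring with scalar identity $1_H$: $(H,h)$ is a canonical $m$-ary hypergroup (a commutative associative $m$-ary hyperoperation $h:H^m\to\mathcal P^*(H)$ with a unique zero $0$ such that $h(u,0^{(m-1)})=\{u\}$, unique inverses, reversibility), $k:H^n\to H$ is a commutative associative $n$-ary operation distributing over $h$ in each argument, $k(0,u_2^n)=0$, and $k(u,1_H^{(n-1)})=u$ for all $u$. Notation: $u_i^j$ denotes $u_i,\dots,u_j$ (empty if $j<i$); $u^{(t)}$ denotes $u$ repeated $t$ times; for $r=l(n-1)+1$, $k_{(l)}(u_1^r)=k(k(\cdots k(k(u_1^n),u_{n+1}^{2n-1})\cdots),u_{r-n+1}^{r})$. A hyperideal is a nonempty $I\subseteq H$ such that $(I,h)$ is an $m$-ary subhypergroup and $k(u_1^{i-1},I,u_{i+1}^n)\subseteq I$ for all $u_j\in H$. An endomorphism is a map $\theta$ with $\theta(h(u_1^m))=h(\theta(u_1),\dots,\theta(u_m))$, $\theta(k(u_1^n))=k(\theta(u_1),\dots,\theta(u_n))$, $\theta(1_H)=1_H$. $rad(E)$ is the intersection of all $n$-ary prime hyperideals (proper hyperideals $P$ with $k(u_1^n)\in P\Rightarrow$ some $u_i\in P$) containing $E$; equivalently the set of $u$ with $k(u^{(r)},1_H^{(n-r)})\in E$ for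 some $r\le n$ or $k_{(l)}(u^{(r)})\in E$ for some $r=l(n-1)+1>n$. A proper hyperideal $E$ is an $n$-ary Endo-prime hyperideal associated with $\theta$ if for all $u_1,\dots,u_n\in H$, $k(u_1^n)\in E$ implies that for some $i$, $u_i\in E$ or $\theta\big(k(u_1^{i-1},1_H,u_{i+1}^n)\big)\in E$; it is an $n$-ary Endo-primary hyperideal associated with $\theta$ if $k(u_1^n)\in E$ implies that for some $i$, $u_i\in E$ or $\theta\big(k(u_1^{i-1},1_H,u_{i+1}^n)\big)\in rad(E)$. *)

theory Defs
  imports Main "HOL-Library.Multiset"
begin

text \<open>The carrier H is the whole type 'a.
  The m-ary hyperoperation h and the n-ary operation k take lists; they are only
  meaningful on lists of length m resp. n. Argument lists are 0-indexed.\<close>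

definition sing :: "'a \<Rightarrow> 'a set" where "sing x = {x}"

definition hset :: "('a list \<Rightarrow> 'a set) \<Rightarrow> 'a set list \<Rightarrow> 'a set" where
  "hset h As = \<Union> {h xs | xs. list_all2 (\<in>) xs As}"

definition neg_of :: "nat \<Rightarrow> ('a list \<Rightarrow> 'a set) \<Rightarrow> 'a \<Rightarrow> 'a \<Rightarrow> 'a" where
  "neg_of m h z x = (THE y. z \<in> h (x # y # replicate (m - 2) z))"

definition canonical_hypergroup :: "nat \<Rightarrow> ('a list \<Rightarrow> 'a set) \<Rightarrow> 'a \<Rightarrow> bool" where
  "canonical_hypergroup m h z \<longleftrightarrow>
     2 \<le> m \<and>
     (\<forall>xs. length xs = m \<longrightarrow> h xs \<noteq> {}) \<and>
     \<comment> \<open>associativity\<close>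
     (\<forall>xs i. length xs = 2 * m - 1 \<and> i < m \<longrightarrow>
        hset h (map sing (take i xs) @ [h (take m (drop i xs))] @ map sing (drop (i + m) xs))
        = hset h ([h (take m xs)] @ map sing (drop m xs))) \<and>
     \<comment> \<open>commutativity\<close>
     (\<forall>xs ys. length xs = m \<and> mset xs = mset ys \<longrightarrow> h xs = h ys) \<and>
     \<comment> \<open>unique zero\<close>
     (\<forall>x. h (x # replicate (m - 1) z) = {x}) \<and>
     (\<forall>z'. (\<forall>x. h (x # replicate (m - 1) z') = {x}) \<longrightarrow> z' = z) \<and>
     \<comment> \<open>unique inverses\<close>
     (\<forall>x. \<exists>!y. z \<in> h (x # y # replicate (m - 2) z)) \<and>
     \<comment> \<open>reversibility (for every position, using commutativity to put it first)\<close>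
     (\<forall>x xs i. length xs = m \<and> i < m \<and> x \<in> h xs \<longrightarrow>
        xs ! i \<in> h ((map (neg_of m h z) xs)[i := x]))"

definition krasner_hyperring ::
  "nat \<Rightarrow> nat \<Rightarrow> ('a list \<Rightarrow> 'a set) \<Rightarrow> ('a list \<Rightarrow> 'a) \<Rightarrow> 'a \<Rightarrow> 'a \<Rightarrow> bool" where
  "krasner_hyperring m n h k z one \<longleftrightarrow>
     canonical_hypergroup m h z \<and> 2 \<le> n \<and>
     \<comment> \<open>k commutative\<close>
     (\<forall>xs ys. length xs = n \<and> mset xs = mset ys \<longrightarrow> k xs = k ys) \<and>
     \<comment> \<open>k associative\<close>
     (\<forall>xs i. length xs = 2 * n - 1 \<and> i < n \<longrightarrow>
        k (take i xs @ [k (take n (drop i xs))] @ drop (i + n) xs)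
        = k (k (take n xs) # drop n xs)) \<and>
     \<comment> \<open>k distributes over h in each argument\<close>
     (\<forall>xs ys i. length xs = n - 1 \<and> length ys = m \<and> i < n \<longrightarrow>
        (\<lambda>a. k (take i xs @ a # drop i xs)) ` h ys
        = h (map (\<lambda>y. k (take i xs @ y # drop i xs)) ys)) \<and>
     \<comment> \<open>zero is absorbing\<close>
     (\<forall>xs. length xs = n - 1 \<longrightarrow> k (z # xs) = z) \<and>
     \<comment> \<open>scalar identity\<close>
     (\<forall>x. k (x # replicate (n - 1) one) = x)"

definition subhypergroup :: "nat \<Rightarrow> ('a list \<Rightarrow> 'a set) \<Rightarrow> 'a set \<Rightarrow> bool" where
  "subhypergroup m h I \<longleftrightarrow>
     I \<noteq> {} \<and>
     (\<forall>xs. length xs = m \<and> set xs \<subseteq> I \<longrightarrow> h xs \<subseteq> I) \<and>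
     (\<forall>xs i. length xs = m - 1 \<and> set xs \<subseteq> I \<and> i < m \<longrightarrow>
        hset h (map sing (take i xs) @ [I] @ map sing (drop i xs)) = I)"

definition hyperideal ::
  "nat \<Rightarrow> nat \<Rightarrow> ('a list \<Rightarrow> 'a set) \<Rightarrow> ('a list \<Rightarrow> 'a) \<Rightarrow> 'a set \<Rightarrow> bool" where
  "hyperideal m n h k I \<longleftrightarrow>
     subhypergroup m h I \<and>
     (\<forall>xs i a. length xs = n \<and> i < n \<and> a \<in> I \<longrightarrow> k (xs[i := a]) \<in> I)"

definition n_prime ::
  "nat \<Rightarrow> nat \<Rightarrow> ('a list \<Rightarrow> 'a set) \<Rightarrow> ('a list \<Rightarrow> 'a) \<Rightarrow> 'a set \<Rightarrow> bool" where
  "n_prime m n h k P \<longleftrightarrow>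
     hyperideal m n h k P \<and> P \<noteq> UNIV \<and>
     (\<forall>xs. length xs = n \<and> k xs \<in> P \<longrightarrow> (\<exists>i<n. xs ! i \<in> P))"

definition rad ::
  "nat \<Rightarrow> nat \<Rightarrow> ('a list \<Rightarrow> 'a set) \<Rightarrow> ('a list \<Rightarrow> 'a) \<Rightarrow> 'a set \<Rightarrow> 'a set" where
  "rad m n h k E = \<Inter> {P. n_prime m n h k P \<and> E \<subseteq> P}"

definition endomorphism ::
  "nat \<Rightarrow> nat \<Rightarrow> ('a list \<Rightarrow> 'a set) \<Rightarrow> ('a list \<Rightarrow> 'a) \<Rightarrow> 'a \<Rightarrow> ('a \<Rightarrow> 'a) \<Rightarrow> bool" where
  "endomorphism m n h k one \<theta> \<longleftrightarrow>
     (\<forall>xs. length xs = m \<longrightarrow> \<theta> ` h xs = h (map \<theta> xs)) \<and>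
     (\<forall>xs. length xs = n \<longrightarrow> \<theta> (k xs) = k (map \<theta> xs)) \<and>
     \<theta> one = one"

definition endo_prime ::
  "nat \<Rightarrow> nat \<Rightarrow> ('a list \<Rightarrow> 'a set) \<Rightarrow> ('a list \<Rightarrow> 'a) \<Rightarrow> 'a \<Rightarrow> ('a \<Rightarrow> 'a) \<Rightarrow> 'a set \<Rightarrow> bool" where
  "endo_prime m n h k one \<theta> E \<longleftrightarrow>
     hyperideal m n h k E \<and> E \<noteq> UNIV \<and>
     (\<forall>xs. length xs = n \<and> k xs \<in> E \<longrightarrow>
        (\<exists>i<n. xs ! i \<in> E \<or> \<theta> (k (xs[i := one])) \<in> E))"

definition endo_primary ::
  "nat \<Rightarrow> nat \<Rightarrow> ('a list \<Rightarrow> 'a set) \<Rightarrow> ('a list \<Rightarrow> 'a) \<Rightarrow> 'a \<Rightarrow> ('a \<Rightarrow> 'a) \<Rightarrow> 'a set \<Rightarrow> bool" where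
  "endo_primary m n h k one \<theta> E \<longleftrightarrow>
     hyperideal m n h k E \<and> E \<noteq> UNIV \<and>
     (\<forall>xs. length xs = n \<and> k xs \<in> E \<longrightarrow>
        (\<exists>i<n. xs ! i \<in> E \<or> \<theta> (k (xs[i := one])) \<in> rad m n h k E))"

end

theory Submission
  imports Defs
begin

(* With the scalar identity, k(u_1, ..., u_n) is the iterated binary product
   u_1 \<odot> ... \<odot> u_n, where x \<odot> y = k(x, y, 1, ..., 1) is a commutative monoid, and
   hyperideals are the subhypergroups absorbing \<odot>. A Krull-type argument (a hyperideal
   maximal among those avoiding the powers of u is n-ary prime) shows that rad(E)
   consists of the u having some power in E.
   So if k(u_1, ..., u_n) \<in> rad(E), then k(u_1^j, ..., u_n^j) \<in> E for some j, and
   Endo-primarity of E gives an i with u_i^j \<in> E or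
   \<theta>(k(u_1^j, ..., 1, ..., u_n^j)) = \<theta>(k(u_1, ..., 1, ..., u_n))^j \<in> rad(E);
   in both cases the radical absorbs the j-th power. *)

locale krasner =
  fixes m n :: nat and h :: "'a list \<Rightarrow> 'a set" and k :: "'a list \<Rightarrow> 'a" and z one :: 'a
  assumes krasner_hyperring: "krasner_hyperring m n h k z one"
begin

abbreviation neg :: "'a \<Rightarrow> 'a" where
  "neg \<equiv> neg_of m h z"

lemma m_ge_2: "2 \<le> m"
  using krasner_hyperring by (simp add: krasner_hyperring_def canonical_hypergroup_def)

lemma h_nonempty: "length xs = m \<Longrightarrow> h xs \<noteq> {}"
  using krasner_hyperring unfolding krasner_hyperring_def canonical_hypergroup_def by (elim conjE) blast

lemma h_commute: "length xs = m \<Longrightarrow> mset xs = mset ys \<Longrightarrow> h xs = h ys"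
  using krasner_hyperring unfolding krasner_hyperring_def canonical_hypergroup_def by (elim conjE) blast

lemma ex1_inverse: "\<exists>!y. z \<in> h (x # y # replicate (m - 2) z)"
  using krasner_hyperring unfolding krasner_hyperring_def canonical_hypergroup_def
  by (elim conjE) (erule allE)

lemma h_reversible: "length xs = m \<Longrightarrow> i < m \<Longrightarrow> x \<in> h xs \<Longrightarrow>
    xs ! i \<in> h ((map neg xs)[i := x])"
  using krasner_hyperring unfolding krasner_hyperring_def canonical_hypergroup_def by (elim conjE) blast

lemma n_ge_2: "2 \<le> n"
  using krasner_hyperring by (simp add: krasner_hyperring_def)

lemma k_commute: "length xs = n \<Longrightarrow> mset xs = mset ys \<Longrightarrow> k xs = k ys"
  using krasner_hyperring unfolding krasner_hyperring_def by (elim conjE) blast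

lemma k_assoc: "length xs = 2 * n - 1 \<Longrightarrow> i < n \<Longrightarrow>
    k (take i xs @ [k (take n (drop i xs))] @ drop (i + n) xs) = k (k (take n xs) # drop n xs)"
  using krasner_hyperring unfolding krasner_hyperring_def by (elim conjE) blast

lemma k_distrib: "length xs = n - 1 \<Longrightarrow> length ys = m \<Longrightarrow> i < n \<Longrightarrow>
    (\<lambda>a. k (take i xs @ a # drop i xs)) ` h ys = h (map (\<lambda>y. k (take i xs @ y # drop i xs)) ys)"
  using krasner_hyperring unfolding krasner_hyperring_def by (elim conjE) blast

lemma k_zero: "length xs = n - 1 \<Longrightarrow> k (z # xs) = z"
  using krasner_hyperring unfolding krasner_hyperring_def by (elim conjE) blast

lemma k_one: "k (x # replicate (n - 1) one) = x"
  using krasner_hyperring unfolding krasner_hyperring_def by (elim conjE) blast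

subsection \<open>The binary product\<close>

definition mul :: "'a \<Rightarrow> 'a \<Rightarrow> 'a" (infixl \<open>\<odot>\<close> 70) where
  "x \<odot> y = k (x # y # replicate (n - 2) one)"

definition k_padded :: "'a list \<Rightarrow> 'a" where
  "k_padded ys = k (ys @ replicate (n - length ys) one)"

lemma Cons_replicate_n_minus_2: "x # replicate (n - 2) x = replicate (n - 1) x"
proof -
  have "n - 1 = Suc (n - 2)"
    using n_ge_2 by arith
  then show ?thesis
    by simp
qed

lemma mul_commute: "x \<odot> y = y \<odot> x"
  unfolding mul_def by (rule k_commute) (use n_ge_2 in auto)

lemma mul_one: "x \<odot> one = x"
  using k_one[of x] by (simp add: mul_def Cons_replicate_n_minus_2)

lemma k_padded_Nil: "k_padded [] = one"
  unfolding k_padded_def using k_one[of one] n_ge_2 by (cases n) simp_all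

lemma k_padded_Cons:
  assumes "length ys < n"
  shows "k_padded (x # ys) = x \<odot> k_padded ys"
proof -
  let ?l = "length ys"
  define L where "L = x # (ys @ replicate (n - ?l) one) @ replicate (n - 2) one"
  have "length L = 2 * n - 1" "1 < n"
    using n_ge_2 assms by (simp_all add: L_def)
  note k_assoc[OF this]
  moreover have "take 1 L @ [k (take n (drop 1 L))] @ drop (1 + n) L
      = x # k_padded ys # replicate (n - 2) one"
    using assms by (simp add: L_def k_padded_def)
  moreover have "take n L = x # ys @ replicate (n - length (x # ys)) one"
    using assms n_ge_2 by (cases n) (auto simp: L_def min_def)
  moreover have "drop n L = replicate (n - 1) one"
  proof -
    have "drop n L = drop (n - 1 - ?l) (replicate (n - ?l) one) @ replicate (n - 2) one"
      using assms n_ge_2 by (cases n) (auto simp: L_def)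
    also have "\<dots> = one # replicate (n - 2) one"
      using assms by (simp add: Suc_diff_Suc)
    finally show ?thesis
      by (simp add: Cons_replicate_n_minus_2)
  qed
  ultimately show ?thesis
    using k_one[of "k_padded (x # ys)"] by (simp add: mul_def k_padded_def)
qed

lemma k_padded_perm: "length xs \<le> n \<Longrightarrow> mset xs = mset ys \<Longrightarrow> k_padded xs = k_padded ys"
  unfolding k_padded_def by (rule k_commute) (auto dest: mset_eq_length)

lemma mul_assoc: "x \<odot> y \<odot> w = x \<odot> (y \<odot> w)"
proof (cases "n = 2")
  case True
  have "length [x, y, w] = 2 * n - 1" "1 < n"
    using True by simp_all
  from k_assoc[OF this] show ?thesis
    unfolding mul_def using True by simp
next
  case False
  then have "2 < n"
    using n_ge_2 by simp
  have binary: "a \<odot> b = k_padded [a, b]" for a b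
    by (simp add: mul_def k_padded_def numeral_2_eq_2)
  have "x \<odot> y \<odot> w = w \<odot> k_padded [x, y]"
    by (simp only: mul_commute[of _ w] binary[of x y])
  also have "\<dots> = k_padded [w, x, y]"
    using \<open>2 < n\<close> by (simp add: k_padded_Cons)
  also have "\<dots> = k_padded [x, y, w]"
    using \<open>2 < n\<close> by (intro k_padded_perm) simp_all
  also have "\<dots> = x \<odot> (y \<odot> w)"
    using \<open>2 < n\<close> by (simp add: k_padded_Cons binary[of y w])
  finally show ?thesis .
qed

lemma one_mul: "one \<odot> x = x"
  by (subst mul_commute) (rule mul_one)

sublocale mult: comm_monoid_list "(\<odot>)" one
  by unfold_locales (fact mul_assoc mul_commute mul_one one_mul)+

lemma k_padded_eq_prod: "length ys \<le> n \<Longrightarrow> k_padded ys = mult.F ys"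
  by (induction ys) (simp_all add: k_padded_Nil k_padded_Cons)

lemma k_eq_prod: "length xs = n \<Longrightarrow> k xs = mult.F xs"
  using k_padded_eq_prod[of xs] by (simp add: k_padded_def)

definition pow :: "'a \<Rightarrow> nat \<Rightarrow> 'a" where
  "pow x j = mult.F (replicate j x)"

lemma pow_0 [simp]: "pow x 0 = one"
  by (simp add: pow_def)

lemma pow_Suc [simp]: "pow x (Suc j) = x \<odot> pow x j"
  by (simp add: pow_def)

lemma pow_add: "pow x (i + j) = pow x i \<odot> pow x j"
  by (simp add: pow_def replicate_add)

lemma pow_one_base [simp]: "pow one j = one"
  by (induction j) simp_all

lemma pow_mul_distrib: "pow (a \<odot> b) j = pow a j \<odot> pow b j"
  by (induction j) (simp_all add: mult.assoc mult.left_commute)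

lemma pow_prod: "pow (mult.F xs) j = mult.F (map (\<lambda>x. pow x j) xs)"
  by (induction xs) (simp_all add: pow_mul_distrib)

lemma k_map_pow: "length xs = n \<Longrightarrow> k (map (\<lambda>x. pow x j) xs) = pow (k xs) j"
  by (simp add: k_eq_prod pow_prod)

subsection \<open>Inverses and hyperideals\<close>

lemma mul_zero_left: "z \<odot> a = z"
  unfolding mul_def by (rule k_zero) (use n_ge_2 in simp)

lemma neg_inverse: "z \<in> h (x # neg x # replicate (m - 2) z)"
  unfolding neg_of_def by (rule theI'[OF ex1_inverse])

lemma neg_unique: "z \<in> h (x # y # replicate (m - 2) z) \<Longrightarrow> y = neg x"
  unfolding neg_of_def by (rule the1_equality[OF ex1_inverse, symmetric])

lemma neg_neg: "neg (neg x) = x"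
proof -
  have "h (x # neg x # replicate (m - 2) z) = h (neg x # x # replicate (m - 2) z)"
    by (rule h_commute) (use m_ge_2 in auto)
  then show ?thesis
    using neg_inverse[of x] neg_unique by metis
qed

lemma h_reversible_insert:
  assumes "length xs = m - 1" "i \<le> length xs"
    and "y \<in> h (take i (map neg xs) @ a # drop i (map neg xs))"
  shows "a \<in> h (take i xs @ y # drop i xs)"
proof -
  let ?M = "take i (map neg xs) @ a # drop i (map neg xs)"
  have "length ?M = m" "i < m"
    using assms m_ge_2 by simp_all
  from h_reversible[OF this assms(3)] show ?thesis
    using assms(2)
    by (simp add: nth_append list_update_append take_map drop_map neg_neg comp_def)
qed

lemma list_all2_in_map_sing: "list_all2 (\<in>) xs (map sing ys) \<longleftrightarrow> xs = ys"
  by (simp add: list_all2_map2 sing_def list_all2_eq)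

lemma list_all2_in_insert:
  "list_all2 (\<in>) xs (map sing us @ [A] @ map sing vs) \<longleftrightarrow> (\<exists>y\<in>A. xs = us @ y # vs)"
proof
  assume "list_all2 (\<in>) xs (map sing us @ [A] @ map sing vs)"
  then obtain xs1 xs2 where "xs = xs1 @ xs2" "list_all2 (\<in>) xs1 (map sing us)"
      "list_all2 (\<in>) xs2 (A # map sing vs)"
    using list_all2_append2[of "(\<in>)" xs "map sing us"] by auto
  then show "\<exists>y\<in>A. xs = us @ y # vs"
    by (auto simp: list_all2_Cons2 list_all2_in_map_sing)
next
  assume "\<exists>y\<in>A. xs = us @ y # vs"
  then show "list_all2 (\<in>) xs (map sing us @ [A] @ map sing vs)"
    by (auto simp: list_all2_in_map_sing intro!: list_all2_appendI)
qed

lemma hset_insert: "hset h (map sing us @ [A] @ map sing vs) = (\<Union>y\<in>A. h (us @ y # vs))"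
  unfolding hset_def list_all2_in_insert by blast

lemma prod_mem_if_absorbing:
  assumes "\<forall>a\<in>I. \<forall>y. a \<odot> y \<in> I" "x \<in> set xs" "x \<in> I"
  shows "mult.F xs \<in> I"
  using assms(2)
proof (induction xs)
  case (Cons a xs)
  then show ?case
    using assms(1,3) mult.commute by (cases "x = a") auto
qed simp

lemma subhypergroupI:
  assumes zero: "z \<in> I"
    and closed: "\<And>xs. length xs = m \<Longrightarrow> set xs \<subseteq> I \<Longrightarrow> h xs \<subseteq> I"
    and neg_closed: "\<And>x. x \<in> I \<Longrightarrow> neg x \<in> I"
  shows "subhypergroup m h I"
proof -
  have "(\<Union>y\<in>I. h (take i xs @ y # drop i xs)) = I"
    if xs: "length xs = m - 1" "set xs \<subseteq> I" and "i < m" for xs i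
  proof
    show "(\<Union>y\<in>I. h (take i xs @ y # drop i xs)) \<subseteq> I"
    proof (rule UN_least)
      fix y assume "y \<in> I"
      then have "length (take i xs @ y # drop i xs) = m" "set (take i xs @ y # drop i xs) \<subseteq> I"
        using xs \<open>i < m\<close> m_ge_2 by (auto dest: in_set_takeD in_set_dropD)
      then show "h (take i xs @ y # drop i xs) \<subseteq> I"
        by (rule closed)
    qed
    show "I \<subseteq> (\<Union>y\<in>I. h (take i xs @ y # drop i xs))"
    proof
      fix a assume "a \<in> I"
      let ?M = "take i (map neg xs) @ a # drop i (map neg xs)"
      have "set ?M \<subseteq> insert a (neg ` set xs)"
        using set_take_subset set_drop_subset by fastforce
      moreover have "neg ` set xs \<subseteq> I"
        using xs(2) neg_closed by blast
      ultimately have "set ?M \<subseteq> I" "length ?M = m"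
        using xs \<open>i < m\<close> \<open>a \<in> I\<close> m_ge_2 by (blast, simp)
      then obtain y where "y \<in> h ?M" "y \<in> I"
        using h_nonempty closed by blast
      moreover have "i \<le> length xs"
        using xs \<open>i < m\<close> by simp
      ultimately show "a \<in> (\<Union>y\<in>I. h (take i xs @ y # drop i xs))"
        using h_reversible_insert[OF xs(1)] by blast
    qed
  qed
  then show ?thesis
    unfolding subhypergroup_def hset_insert using zero closed by blast
qed

lemma hyperideal_h_closed:
  "hyperideal m n h k I \<Longrightarrow> length xs = m \<Longrightarrow> set xs \<subseteq> I \<Longrightarrow> h xs \<subseteq> I"
  by (simp add: hyperideal_def subhypergroup_def)

lemma hyperideal_mul:
  assumes "hyperideal m n h k I" "a \<in> I"
  shows "a \<odot> y \<in> I"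
proof -
  have "\<forall>xs i a. length xs = n \<and> i < n \<and> a \<in> I \<longrightarrow> k (xs[i := a]) \<in> I"
    using assms(1) by (simp add: hyperideal_def)
  from this[rule_format, of "a # y # replicate (n - 2) one" 0 a] show ?thesis
    using assms(2) n_ge_2 by (simp add: mul_def)
qed

lemma hyperideal_zero:
  assumes "hyperideal m n h k I"
  shows "z \<in> I"
proof -
  obtain a where "a \<in> I"
    using assms by (auto simp: hyperideal_def subhypergroup_def)
  then have "a \<odot> z \<in> I"
    by (rule hyperideal_mul[OF assms])
  then show ?thesis
    by (simp add: mul_commute[of a] mul_zero_left)
qed

lemma hyperideal_neg:
  assumes "hyperideal m n h k I" "x \<in> I"
  shows "neg x \<in> I"
proof -
  let ?xs = "x # replicate (m - 2) z"
  have "length ?xs = m - 1 \<and> set ?xs \<subseteq> I \<and> 1 < m"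
    using m_ge_2 assms hyperideal_zero by auto
  then have "hset h (map sing (take 1 ?xs) @ [I] @ map sing (drop 1 ?xs)) = I"
    using assms(1) unfolding hyperideal_def subhypergroup_def by blast
  then have "(\<Union>y\<in>I. h (x # y # replicate (m - 2) z)) = I"
    using hset_insert[of "[x]" I "replicate (m - 2) z"] by simp
  then obtain y where "y \<in> I" "z \<in> h (x # y # replicate (m - 2) z)"
    using hyperideal_zero[OF assms(1)] by blast
  then show ?thesis
    using neg_unique by blast
qed

lemma hyperidealI:
  assumes "z \<in> I" "\<And>xs. length xs = m \<Longrightarrow> set xs \<subseteq> I \<Longrightarrow> h xs \<subseteq> I"
    and "\<And>x. x \<in> I \<Longrightarrow> neg x \<in> I" "\<And>a y. a \<in> I \<Longrightarrow> a \<odot> y \<in> I"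
  shows "hyperideal m n h k I"
  unfolding hyperideal_def
proof (intro conjI subhypergroupI allI impI)
  fix xs :: "'a list" and i a assume "length xs = n \<and> i < n \<and> a \<in> I"
  then show "k (xs[i := a]) \<in> I"
    using prod_mem_if_absorbing[of I a] assms(4) by (simp add: k_eq_prod set_update_memI)
qed (use assms in auto)

lemma one_notin_hyperideal: "hyperideal m n h k I \<Longrightarrow> I \<noteq> UNIV \<Longrightarrow> one \<notin> I"
  using hyperideal_mul one_mul by fastforce

lemma hyperideal_Inter:
  assumes "\<And>P. P \<in> F \<Longrightarrow> hyperideal m n h k P"
  shows "hyperideal m n h k (\<Inter>F)"
proof (rule hyperidealI)
  show "z \<in> \<Inter>F"
    using assms hyperideal_zero by blast
  show "neg x \<in> \<Inter>F" if "x \<in> \<Inter>F" for x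
    using that assms hyperideal_neg by blast
  show "a \<odot> y \<in> \<Inter>F" if "a \<in> \<Inter>F" for a y
    using that assms hyperideal_mul by blast
  show "h xs \<subseteq> \<Inter>F" if "length xs = m" "set xs \<subseteq> \<Inter>F" for xs
  proof (rule Inter_greatest)
    fix P assume "P \<in> F"
    then show "h xs \<subseteq> P"
      using hyperideal_h_closed[OF assms that(1)] that(2) by blast
  qed
qed

lemma hyperideal_Union_chain:
  assumes "C \<noteq> {}" "subset.chain A C" "\<And>I. I \<in> C \<Longrightarrow> hyperideal m n h k I"
  shows "hyperideal m n h k (\<Union>C)"
proof (rule hyperidealI)
  show "z \<in> \<Union>C"
    using assms(1,3) hyperideal_zero by blast
  show "neg x \<in> \<Union>C" if "x \<in> \<Union>C" for x
    using that assms(3) hyperideal_neg by blast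
  show "a \<odot> y \<in> \<Union>C" if "a \<in> \<Union>C" for a y
    using that assms(3) hyperideal_mul by blast
  show "h xs \<subseteq> \<Union>C" if xs: "length xs = m" "set xs \<subseteq> \<Union>C" for xs
  proof -
    obtain B where "B \<in> C" "set xs \<subseteq> B"
      using finite_subset_Union_chain[OF finite_set xs(2) assms(1,2)] by blast
    then show ?thesis
      using hyperideal_h_closed[OF assms(3) xs(1)] by blast
  qed
qed

subsection \<open>Prime hyperideals and Krull's lemma\<close>

lemma prod_mem_prime:
  assumes "one \<notin> P" "\<And>a b. a \<odot> b \<in> P \<Longrightarrow> a \<in> P \<or> b \<in> P" "mult.F xs \<in> P"
  shows "\<exists>x\<in>set xs. x \<in> P"
  using assms(3) by (induction xs) (use assms(1,2) in auto)

lemma n_prime_mul: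
  assumes "n_prime m n h k P" "a \<odot> b \<in> P"
  shows "a \<in> P \<or> b \<in> P"
proof -
  let ?L = "a # b # replicate (n - 2) one"
  have "length ?L = n"
    using n_ge_2 by simp
  then obtain i where "i < n" "?L ! i \<in> P"
    using assms unfolding n_prime_def mul_def by blast
  then have "?L ! i \<in> {a, b, one}"
    using nth_mem[of i ?L] \<open>length ?L = n\<close> by auto
  moreover have "one \<notin> P"
    using assms(1) one_notin_hyperideal by (simp add: n_prime_def)
  ultimately show ?thesis
    using \<open>?L ! i \<in> P\<close> by auto
qed

lemma n_prime_prod:
  assumes "n_prime m n h k P" "mult.F xs \<in> P"
  shows "\<exists>x\<in>set xs. x \<in> P"
proof (rule prod_mem_prime)
  show "one \<notin> P"
    using assms(1) one_notin_hyperideal by (simp add: n_prime_def)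
qed (use assms n_prime_mul in auto)

lemma n_prime_pow: "n_prime m n h k P \<Longrightarrow> pow x j \<in> P \<Longrightarrow> x \<in> P"
  unfolding pow_def by (drule (1) n_prime_prod) auto

lemma n_primeI:
  assumes "hyperideal m n h k P" "one \<notin> P" "\<And>a b. a \<odot> b \<in> P \<Longrightarrow> a \<in> P \<or> b \<in> P"
  shows "n_prime m n h k P"
  unfolding n_prime_def
proof (intro conjI allI impI)
  fix xs assume xs: "length xs = n \<and> k xs \<in> P"
  then have "mult.F xs \<in> P"
    using k_eq_prod[of xs] by simp
  then obtain x where "x \<in> set xs" "x \<in> P"
    using prod_mem_prime[OF assms(2,3)] by blast
  then show "\<exists>i<n. xs ! i \<in> P"
    using xs by (auto simp: in_set_conv_nth)
qed (use assms in auto)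

lemma h_mul_right: "length ys = m \<Longrightarrow> (\<lambda>b. b \<odot> a) ` h ys = h (map (\<lambda>y. y \<odot> a) ys)"
  using k_distrib[of "a # replicate (n - 2) one" ys 0] n_ge_2 by (simp add: mul_def)

lemma neg_mul_left: "neg x \<odot> a = neg (x \<odot> a)"
proof -
  have "z \<odot> a \<in> (\<lambda>b. b \<odot> a) ` h (x # neg x # replicate (m - 2) z)"
    using neg_inverse by blast
  then have "z \<in> h (x \<odot> a # neg x \<odot> a # replicate (m - 2) z)"
    using h_mul_right[of "x # neg x # replicate (m - 2) z"] m_ge_2 by (simp add: mul_zero_left)
  then show ?thesis
    by (rule neg_unique)
qed

lemma hyperideal_colon:
  assumes "hyperideal m n h k P"
  shows "hyperideal m n h k {x. x \<odot> a \<in> P}"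
proof (rule hyperidealI)
  show "z \<in> {x. x \<odot> a \<in> P}"
    using assms hyperideal_zero by (simp add: mul_zero_left)
  show "h xs \<subseteq> {x. x \<odot> a \<in> P}" if "length xs = m" "set xs \<subseteq> {x. x \<odot> a \<in> P}" for xs
    using hyperideal_h_closed[OF assms, of "map (\<lambda>y. y \<odot> a) xs"] h_mul_right[of xs a] that by auto
  show "neg x \<in> {x. x \<odot> a \<in> P}" if "x \<in> {x. x \<odot> a \<in> P}" for x
    using that hyperideal_neg[OF assms] by (simp add: neg_mul_left)
  show "x \<odot> y \<in> {x. x \<odot> a \<in> P}" if "x \<in> {x. x \<odot> a \<in> P}" for x y
    using that hyperideal_mul[OF assms, of "x \<odot> a" y] by (simp add: mult.assoc mult.commute[of a])
qed

lemma exists_maximal_disjoint_hyperideal: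
  assumes "hyperideal m n h k E" "E \<inter> S = {}"
  obtains M where "hyperideal m n h k M" "E \<subseteq> M" "M \<inter> S = {}"
    "\<And>I. hyperideal m n h k I \<Longrightarrow> M \<subseteq> I \<Longrightarrow> I \<inter> S = {} \<Longrightarrow> I = M"
proof -
  let ?A = "{I. hyperideal m n h k I \<and> E \<subseteq> I \<and> I \<inter> S = {}}"
  have "\<exists>M\<in>?A. \<forall>X\<in>?A. M \<subseteq> X \<longrightarrow> X = M"
  proof (rule subset_Zorn_nonempty)
    show "?A \<noteq> {}"
      using assms by blast
    fix C assume C: "C \<noteq> {}" "subset.chain ?A C"
    then have "C \<subseteq> ?A"
      by (simp add: subset.chain_def)
    then have "hyperideal m n h k (\<Union>C)"
      using hyperideal_Union_chain[OF C] by blast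
    then show "\<Union>C \<in> ?A"
      using C(1) \<open>C \<subseteq> ?A\<close> by blast
  qed
  then obtain M where "M \<in> ?A" "\<forall>X\<in>?A. M \<subseteq> X \<longrightarrow> X = M"
    by blast
  then show ?thesis
    by (intro that) auto
qed

lemma maximal_disjoint_hyperideal_n_prime:
  assumes M: "hyperideal m n h k M" "M \<inter> S = {}"
    and max: "\<And>I. hyperideal m n h k I \<Longrightarrow> M \<subseteq> I \<Longrightarrow> I \<inter> S = {} \<Longrightarrow> I = M"
    and S: "one \<in> S" "\<And>a b. a \<in> S \<Longrightarrow> b \<in> S \<Longrightarrow> a \<odot> b \<in> S"
  shows "n_prime m n h k M"
proof (rule n_primeI[OF M(1)])
  show "one \<notin> M"
    using M(2) S(1) by blast
  \<comment> \<open>By maximality, the colon hyperideal of \<open>c\<close> meets \<open>S\<close> unless it equals \<open>M\<close>.\<close>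
  have colon_meets_S: "\<exists>s\<in>S. s \<odot> c \<in> M" if "c \<notin> M" "d \<notin> M" "d \<odot> c \<in> M" for c d
  proof (rule ccontr)
    assume "\<not> (\<exists>s\<in>S. s \<odot> c \<in> M)"
    then have "{x. x \<odot> c \<in> M} \<inter> S = {}"
      by blast
    moreover have "M \<subseteq> {x. x \<odot> c \<in> M}"
      using hyperideal_mul[OF M(1)] by blast
    ultimately have "{x. x \<odot> c \<in> M} = M"
      by (intro max hyperideal_colon M(1))
    then show False
      using that(2,3) by blast
  qed
  fix a b assume "a \<odot> b \<in> M"
  show "a \<in> M \<or> b \<in> M"
  proof (rule ccontr)
    assume "\<not> (a \<in> M \<or> b \<in> M)"
    then have "a \<notin> M" "b \<notin> M"
      by simp_all
    moreover have "b \<odot> a \<in> M"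
      using \<open>a \<odot> b \<in> M\<close> by (simp add: mul_commute[of b])
    ultimately obtain s where "s \<in> S" "s \<odot> a \<in> M"
      using colon_meets_S by blast
    then have "s \<notin> M" "a \<odot> s \<in> M"
      using M(2) by (auto simp: mul_commute[of a])
    then obtain t where "t \<in> S" "t \<odot> s \<in> M"
      using colon_meets_S \<open>a \<notin> M\<close> by blast
    then show False
      using S(2) \<open>s \<in> S\<close> M(2) by blast
  qed
qed

lemma exists_n_prime_disjoint:
  assumes "hyperideal m n h k E" "E \<inter> S = {}"
    and "one \<in> S" "\<And>a b. a \<in> S \<Longrightarrow> b \<in> S \<Longrightarrow> a \<odot> b \<in> S"
  obtains P where "n_prime m n h k P" "E \<subseteq> P" "P \<inter> S = {}"
proof (rule exists_maximal_disjoint_hyperideal[OF assms(1,2)])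
  fix M assume M: "hyperideal m n h k M" "E \<subseteq> M" "M \<inter> S = {}"
    and max: "\<And>I. hyperideal m n h k I \<Longrightarrow> M \<subseteq> I \<Longrightarrow> I \<inter> S = {} \<Longrightarrow> I = M"
  have "n_prime m n h k M"
    by (rule maximal_disjoint_hyperideal_n_prime[OF M(1,3) max assms(3,4)])
  then show ?thesis
    using M(2,3) by (rule that)
qed

subsection \<open>The radical\<close>

lemma hyperideal_rad: "hyperideal m n h k (rad m n h k E)"
  unfolding rad_def by (rule hyperideal_Inter) (simp add: n_prime_def)

lemma mem_rad_if_pow_mem_rad: "pow x j \<in> rad m n h k E \<Longrightarrow> x \<in> rad m n h k E"
  unfolding rad_def using n_prime_pow by blast

lemma mem_rad_iff_pow_mem:
  assumes "hyperideal m n h k E"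
  shows "x \<in> rad m n h k E \<longleftrightarrow> (\<exists>j. pow x j \<in> E)"
proof
  assume x: "x \<in> rad m n h k E"
  show "\<exists>j. pow x j \<in> E"
  proof (rule ccontr)
    let ?S = "range (pow x)"
    assume "\<nexists>j. pow x j \<in> E"
    then have "E \<inter> ?S = {}"
      by blast
    moreover have "one \<in> ?S"
      by (metis pow_0 rangeI)
    moreover have "a \<odot> b \<in> ?S" if "a \<in> ?S" "b \<in> ?S" for a b
      using that by (auto simp: pow_add[symmetric])
    ultimately obtain P where P: "n_prime m n h k P" "E \<subseteq> P" "P \<inter> ?S = {}"
      using exists_n_prime_disjoint[OF assms] by blast
    then have "x \<in> P"
      using x unfolding rad_def by blast
    moreover have "x = pow x 1"
      by (simp add: mul_one)
    then have "x \<in> ?S"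
      by (metis rangeI)
    ultimately show False
      using P(3) by blast
  qed
next
  assume "\<exists>j. pow x j \<in> E"
  then show "x \<in> rad m n h k E"
    using mem_rad_if_pow_mem_rad unfolding rad_def by blast
qed

lemma rad_neq_UNIV:
  assumes "hyperideal m n h k E" "E \<noteq> UNIV"
  shows "rad m n h k E \<noteq> UNIV"
proof -
  have "one \<notin> rad m n h k E"
    using mem_rad_iff_pow_mem[OF assms(1), of one] one_notin_hyperideal[OF assms] by simp
  then show ?thesis
    by blast
qed

lemma endomorphism_mul: "endomorphism m n h k one \<theta> \<Longrightarrow> \<theta> (a \<odot> b) = \<theta> a \<odot> \<theta> b"
  using n_ge_2 by (simp add: endomorphism_def mul_def)

lemma endomorphism_prod:
  "endomorphism m n h k one \<theta> \<Longrightarrow> \<theta> (mult.F xs) = mult.F (map \<theta> xs)"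
  by (induction xs) (simp_all add: endomorphism_mul, simp add: endomorphism_def)

lemma endomorphism_pow: "endomorphism m n h k one \<theta> \<Longrightarrow> \<theta> (pow x j) = pow (\<theta> x) j"
  by (simp add: pow_def endomorphism_prod)

lemma endomorphism_k_update_pow:
  assumes "endomorphism m n h k one \<theta>" "length xs = n"
  shows "\<theta> (k ((map (\<lambda>x. pow x j) xs)[i := one])) = pow (\<theta> (k (xs[i := one]))) j"
proof -
  have "(map (\<lambda>x. pow x j) xs)[i := one] = map (\<lambda>x. pow x j) (xs[i := one])"
    by (simp add: map_update)
  then show ?thesis
    using assms(2) k_map_pow endomorphism_pow[OF assms(1)] by simp
qed

end

theorem mainTheorem16:
  fixes h :: "'a list \<Rightarrow> 'a set" and k :: "'a list \<Rightarrow> 'a"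
    and z one :: 'a and \<theta> :: "'a \<Rightarrow> 'a" and E :: "'a set" and m n :: nat
  assumes "krasner_hyperring m n h k z one"
    and "endomorphism m n h k one \<theta>"
    and "endo_primary m n h k one \<theta> E"
  shows "endo_prime m n h k one \<theta> (rad m n h k E)"
proof -
  interpret krasner m n h k z one
    by (rule krasner.intro) fact
  have E: "hyperideal m n h k E" "E \<noteq> UNIV"
    using assms(3) by (simp_all add: endo_primary_def)
  have "\<exists>i<n. xs ! i \<in> rad m n h k E \<or> \<theta> (k (xs[i := one])) \<in> rad m n h k E"
    if xs: "length xs = n" "k xs \<in> rad m n h k E" for xs
  proof -
    obtain j where "pow (k xs) j \<in> E"
      using xs(2) mem_rad_iff_pow_mem[OF E(1)] by blast
    let ?ys = "map (\<lambda>x. pow x j) xs"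
    have "length ?ys = n" "k ?ys \<in> E"
      using xs(1) \<open>pow (k xs) j \<in> E\<close> by (simp_all add: k_map_pow)
    then obtain i where "i < n" "?ys ! i \<in> E \<or> \<theta> (k (?ys[i := one])) \<in> rad m n h k E"
      using assms(3) unfolding endo_primary_def by blast
    moreover have "xs ! i \<in> rad m n h k E" if "?ys ! i \<in> E"
      using that \<open>i < n\<close> xs(1) mem_rad_iff_pow_mem[OF E(1)] by auto
    moreover have "\<theta> (k (xs[i := one])) \<in> rad m n h k E" if "\<theta> (k (?ys[i := one])) \<in> rad m n h k E"
      using that mem_rad_if_pow_mem_rad endomorphism_k_update_pow[OF assms(2) xs(1)] by metis
    ultimately show ?thesis
      by blast
  qed
  then show ?thesis
    unfolding endo_prime_def using hyperideal_rad rad_neq_UNIV[OF E] by blast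
qed

end
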